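(* Let $n,T\ge1$, $\beta^1,\beta^2\in(0,1)$, and let $\mathcal{V}$ denote the set of all finite products $U_r\cdots U_1$ ($r\ge1$) of matrices $U_s\in\mathcal{S}$. Then: (i) $W$ is invariant under every $H\in\mathcal{V}$; (ii) $\|H\mathbf{z}\|\le\|\mathbf{z}\|$ for all $H\in\mathcal{V}$ and $\mathbf{z}\in W$; (iii) if $Y=U_r\cdots U_1\in\mathcal{V}$ is a product in which at least one factor equals $\begin{bmatrix}E^1&0\\0&I\end{bmatrix}$ and at least one factor equals $\begin{bmatrix}I&0\\0&E^2\end{bmatrix}$, then $\|Y\mathbf{z}\|<\|\mathbf{z}\|$ for every non-zero $\mathbf{z}\in W$.
   Context: $\mathbf{e}\in\mathbb{R}^n$ is the all-ones vector. For $j=1,2$ and $b\in\{\beta^j,1\}^n$, $A_b=\operatorname{diag}(b)+\frac1n\mathbf{e}(\mathbf{e}-b)^\top$; $\mathcal{F}^j=\{A_b:b\in\{\beta^j,1\}^n\}$; $B^j=\beta^jI+\frac{1-\beta^j}{n}\mathbf{e}\mathbf{e}^\top$. For $A\in\mathcal{F}^j$, $D(A)\in\mathbb{R}^{Tn\times Tn}$ is the $T\times T$ block matrix with: block row 1 equal to $(A,0,\dots,0)$; block row 2 (if $T\ge2$) equal to $(\tfrac12(A+I),0,\dots,0)$; for $3\le\ell\le T$, block row $\ell$ has $\tfrac1\ell A$ in block column 1, $\tfrac{\ell-1}{\ell}I$ in block column $\ell-1$, zeros elsewhere. $\mathcal{Q}^j=\{D(A):A\in\mathcal{F}^j\}$,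 $E^j=D(B^j)$. $\mathcal{S}$ is the set of all $2Tn\times2Tn$ matrices $\begin{bmatrix}D^1&0\\0&I\end{bmatrix}$ ($D^1\in\mathcal{Q}^1$) and $\begin{bmatrix}I&0\\0&D^2\end{bmatrix}$ ($D^2\in\mathcal{Q}^2$). For $\mathbf{z}^j=((\mathbf{z}^j_1)^\top,\dots,(\mathbf{z}^j_T)^\top)^\top\in\mathbb{R}^{Tn}$, $\|\mathbf{z}^j\|_T=\max_t\|\mathbf{z}^j_t\|_1$, and for $\mathbf{z}=(\mathbf{z}^1,\mathbf{z}^2)$, $\|\mathbf{z}\|=\max\{\|\mathbf{z}^1\|_T,\|\mathbf{z}^2\|_T\}$. $W=\{(\mathbf{z}^1,\mathbf{z}^2):\mathbf{e}^\top\mathbf{z}^1_t=\mathbf{e}^\top\mathbf{z}^2_t=0,\ t=1,\dots,T\}$. *)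

theory Defs
  imports "Jordan_Normal_Form.Matrix"
begin

text \<open>Matrix A_b = diag(b) + (1/n) e (e - b)^T, with b given by its entries b 0, ..., b (n-1).\<close>
definition Amat :: "nat \<Rightarrow> (nat \<Rightarrow> real) \<Rightarrow> real mat" where
  "Amat n b = mat n n (\<lambda>(i,j). (if i = j then b j else 0) + (1 - b j) / real n)"

definition Fam :: "nat \<Rightarrow> real \<Rightarrow> real mat set" where
  "Fam n \<beta> = {Amat n b | b. \<forall>i<n. b i \<in> {\<beta>, 1}}"

definition Bmat :: "nat \<Rightarrow> real \<Rightarrow> real mat" where
  "Bmat n \<beta> = mat n n (\<lambda>(i,j). (if i = j then \<beta> else 0) + (1 - \<beta>) / real n)"

text \<open>Block (l,k) (0-based, so block row l corresponds to the paper's row l+1) of D(A).\<close>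
definition Dblock :: "nat \<Rightarrow> real mat \<Rightarrow> nat \<Rightarrow> nat \<Rightarrow> real mat" where
  "Dblock n A l k =
     (if l = 0 then (if k = 0 then A else 0\<^sub>m n n)
      else if l = 1 then (if k = 0 then (1/2) \<cdot>\<^sub>m (A + 1\<^sub>m n) else 0\<^sub>m n n)
      else if k = 0 then (1 / real (l+1)) \<cdot>\<^sub>m A
      else if k = l - 1 then (real l / real (l+1)) \<cdot>\<^sub>m 1\<^sub>m n
      else 0\<^sub>m n n)"

definition Dmat :: "nat \<Rightarrow> nat \<Rightarrow> real mat \<Rightarrow> real mat" where
  "Dmat T n A = mat (T*n) (T*n)
     (\<lambda>(r,c). Dblock n A (r div n) (c div n) $$ (r mod n, c mod n))"

definition Emat :: "nat \<Rightarrow> nat \<Rightarrow> real \<Rightarrow> real mat" where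
  "Emat T n \<beta> = Dmat T n (Bmat n \<beta>)"

definition blk1 :: "nat \<Rightarrow> nat \<Rightarrow> real mat \<Rightarrow> real mat" where
  "blk1 T n D = four_block_mat D (0\<^sub>m (T*n) (T*n)) (0\<^sub>m (T*n) (T*n)) (1\<^sub>m (T*n))"

definition blk2 :: "nat \<Rightarrow> nat \<Rightarrow> real mat \<Rightarrow> real mat" where
  "blk2 T n D = four_block_mat (1\<^sub>m (T*n)) (0\<^sub>m (T*n) (T*n)) (0\<^sub>m (T*n) (T*n)) D"

definition Sset :: "nat \<Rightarrow> nat \<Rightarrow> real \<Rightarrow> real \<Rightarrow> real mat set" where
  "Sset T n \<beta>1 \<beta>2 = {blk1 T n (Dmat T n A) | A. A \<in> Fam n \<beta>1}
                   \<union> {blk2 T n (Dmat T n A) | A. A \<in> Fam n \<beta>2}"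

text \<open>Product U_r ... U_1 of the list [U_1, ..., U_r] (N x N identity for the empty list).\<close>
definition lprod :: "nat \<Rightarrow> real mat list \<Rightarrow> real mat" where
  "lprod N Us = fold (\<lambda>U acc. U * acc) Us (1\<^sub>m N)"

definition Vset :: "nat \<Rightarrow> nat \<Rightarrow> real \<Rightarrow> real \<Rightarrow> real mat set" where
  "Vset T n \<beta>1 \<beta>2 = {lprod (2*T*n) Us | Us. Us \<noteq> [] \<and> set Us \<subseteq> Sset T n \<beta>1 \<beta>2}"

text \<open>Vector z in R^{2Tn}: z^1_t (t = 0..T-1) occupies indices t*n + i, z^2_t occupies T*n + t*n + i.\<close>
definition blocknorm :: "nat \<Rightarrow> nat \<Rightarrow> nat \<Rightarrow> real vec \<Rightarrow> real" where
  "blocknorm T n off z = Max {(\<Sum>i<n. \<bar>z $ (off + t*n + i)\<bar>) | t. t < T}"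

definition znorm :: "nat \<Rightarrow> nat \<Rightarrow> real vec \<Rightarrow> real" where
  "znorm T n z = max (blocknorm T n 0 z) (blocknorm T n (T*n) z)"

definition Wset :: "nat \<Rightarrow> nat \<Rightarrow> real vec set" where
  "Wset T n = {z \<in> carrier_vec (2*T*n).
      \<forall>t<T. (\<Sum>i<n. z $ (t*n + i)) = 0 \<and> (\<Sum>i<n. z $ (T*n + t*n + i)) = 0}"

end

theory Submission
  imports Defs
begin

text \<open>Each matrix A_b is column stochastic with nonnegative entries, so it preserves the sum of
a vector and does not increase its 1-norm, while B acts on zero-sum vectors as multiplication by
beta. Block l of D(A) y (counting from 0) is (A y_0 + l y_(l-1)) / (l+1), one formula covering the
three cases of the definition of D(A). Hence D(A) preserves zero block sums and does not increase
the largest block 1-norm M, and for A = B every block has 1-norm at most (beta M + l M)/(l+1) < M.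
Every element of S acts by some D(A) on one half of z and as the identity on the other, so along a
product neither half-norm increases, and each one drops strictly at a factor E^j if it was
positive; a nonzero z has at least one positive half-norm.\<close>

lemma sum_lessThan_mult_nat:
  fixes f :: "nat \<Rightarrow> 'a::comm_monoid_add"
  shows "(\<Sum>c<T*n. f c) = (\<Sum>k<T. \<Sum>j<n. f (k*n + j))"
proof -
  have block: "(\<Sum>c\<in>{k*n..<k*n+n}. f c) = (\<Sum>j<n. f (k*n + j))" for k
    using sum.shift_bounds_nat_ivl[of f 0 "k*n" n] by (simp add: lessThan_atLeast0 add.commute)
  show ?thesis
    unfolding sum.nat_group[of "\<lambda>c. f c" n T, symmetric] block ..
qed

lemma block_index_less: "t < T \<Longrightarrow> i < n \<Longrightarrow> t*n + i < T*(n::nat)"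
  by (metis Suc_leI add_less_cancel_left mult_Suc mult_le_mono1 order_less_le_trans add.commute)

lemma weighted_average_bound:
  fixes a c M :: real
  assumes "c \<le> M"
  shows "a \<le> M \<Longrightarrow> (a + real l * c) / real (l+1) \<le> M"
    and "a < M \<Longrightarrow> (a + real l * c) / real (l+1) < M"
proof -
  have "real l * c \<le> real l * M" using assms by (simp add: mult_left_mono)
  then show "a \<le> M \<Longrightarrow> (a + real l * c) / real (l+1) \<le> M"
    and "a < M \<Longrightarrow> (a + real l * c) / real (l+1) < M"
    by (simp_all add: field_simps)
qed

lemma Amat_carrier [simp]: "Amat n b \<in> carrier_mat n n"
  by (simp add: Amat_def)

lemma Amat_mult_vec_index:
  assumes "v \<in> carrier_vec n" and "i < n"
  shows "(Amat n b *\<^sub>v v) $ i = b i * v $ i + (\<Sum>j<n. (1 - b j) * v $ j) / real n"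
proof -
  have "(Amat n b *\<^sub>v v) $ i = (\<Sum>j<n. (if i = j then b j * v $ j else 0) + (1 - b j) * v $ j / real n)"
    using assms by (auto simp: Amat_def scalar_prod_def lessThan_atLeast0 algebra_simps intro!: sum.cong)
  also have "\<dots> = b i * v $ i + (\<Sum>j<n. (1 - b j) * v $ j) / real n"
    using assms(2) by (simp add: sum.distrib sum_divide_distrib)
  finally show ?thesis .
qed

lemma sum_Amat_mult_vec:
  assumes "v \<in> carrier_vec n"
  shows "(\<Sum>i<n. (Amat n b *\<^sub>v v) $ i) = (\<Sum>i<n. v $ i)"
proof (cases "n = 0")
  case False
  have "(\<Sum>i<n. (Amat n b *\<^sub>v v) $ i) = (\<Sum>i<n. b i * v $ i) + (\<Sum>j<n. (1 - b j) * v $ j)"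
    using assms False by (simp add: Amat_mult_vec_index sum.distrib)
  also have "\<dots> = (\<Sum>i<n. v $ i)"
    by (simp add: sum.distrib[symmetric] algebra_simps)
  finally show ?thesis .
qed simp

lemma l1_Amat_mult_vec_le:
  assumes v: "v \<in> carrier_vec n" and b: "\<forall>i<n. 0 \<le> b i \<and> b i \<le> 1"
  shows "(\<Sum>i<n. \<bar>(Amat n b *\<^sub>v v) $ i\<bar>) \<le> (\<Sum>i<n. \<bar>v $ i\<bar>)"
proof -
  have "\<bar>(Amat n b *\<^sub>v v) $ i\<bar> \<le> b i * \<bar>v $ i\<bar> + (\<Sum>j<n. (1 - b j) * \<bar>v $ j\<bar>) / real n"
    if i: "i < n" for i
  proof -
    have "\<bar>\<Sum>j<n. (1 - b j) * v $ j\<bar> \<le> (\<Sum>j<n. (1 - b j) * \<bar>v $ j\<bar>)"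
      using b by (auto intro!: order_trans[OF sum_abs] sum_mono simp: abs_mult)
    then show ?thesis
      using i b v by (auto simp: Amat_mult_vec_index abs_mult divide_right_mono
          intro!: order_trans[OF abs_triangle_ineq])
  qed
  then have "(\<Sum>i<n. \<bar>(Amat n b *\<^sub>v v) $ i\<bar>)
      \<le> (\<Sum>i<n. b i * \<bar>v $ i\<bar> + (\<Sum>j<n. (1 - b j) * \<bar>v $ j\<bar>) / real n)"
    by (intro sum_mono) auto
  also have "\<dots> = (\<Sum>i<n. b i * \<bar>v $ i\<bar>) + (\<Sum>j<n. (1 - b j) * \<bar>v $ j\<bar>)"
    by (cases "n = 0") (simp_all add: sum.distrib)
  also have "\<dots> = (\<Sum>i<n. \<bar>v $ i\<bar>)"
    by (simp add: sum.distrib[symmetric] algebra_simps)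
  finally show ?thesis .
qed

lemma Amat_const_mult_vec_index:
  assumes "v \<in> carrier_vec n" and "i < n" and "(\<Sum>j<n. v $ j) = 0"
  shows "(Amat n (\<lambda>_. \<beta>) *\<^sub>v v) $ i = \<beta> * v $ i"
  using assms by (simp add: Amat_mult_vec_index sum_distrib_left[symmetric])

lemma Dmat_carrier [simp]: "Dmat T n A \<in> carrier_mat (T*n) (T*n)"
  by (simp add: Dmat_def)

lemma Dmat_mult_vec_carrier [simp]: "x \<in> carrier_vec (T*n) \<Longrightarrow> Dmat T n A *\<^sub>v x \<in> carrier_vec (T*n)"
  by (rule mult_mat_vec_carrier[OF Dmat_carrier])

lemma Dblock_index:
  assumes "A \<in> carrier_mat n n" and "i < n" and "j < n"
  shows "Dblock n A l k $$ (i, j) = (if k = 0 then A $$ (i, j) / real (l+1) else 0)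
      + (if 0 < l \<and> k = l - 1 \<and> i = j then real l / real (l+1) else 0)"
  using assms by (auto simp: Dblock_def)

text \<open>For l = 0 the second summand has coefficient 0; its index (l - 1) * n + i is then just i.\<close>

lemma Dmat_mult_vec_index:
  assumes A: "A \<in> carrier_mat n n" and x: "x \<in> carrier_vec (T*n)" and l: "l < T" and i: "i < n"
  shows "(Dmat T n A *\<^sub>v x) $ (l*n + i)
      = (A *\<^sub>v vec_first x n) $ i / real (l+1) + real l / real (l+1) * x $ ((l-1)*n + i)"
proof -
  have row: "(\<Sum>j<n. Dblock n A l k $$ (i, j) * x $ (k*n + j))
      = (if k = 0 then (A *\<^sub>v vec_first x n) $ i / real (l+1) else 0)
        + (if 0 < l \<and> k = l - 1 then real l / real (l+1) * x $ ((l-1)*n + i) else 0)" for k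
    using A i by (auto simp: Dblock_index distrib_right sum.distrib sum_divide_distrib if_distrib[of "\<lambda>u. u * _"]
        vec_first_def scalar_prod_def lessThan_atLeast0 cong: if_cong)
  have "(Dmat T n A *\<^sub>v x) $ (l*n + i) = (\<Sum>c<T*n. Dblock n A l (c div n) $$ (i, c mod n) * x $ c)"
    using x i block_index_less[OF l i] by (simp add: Dmat_def scalar_prod_def lessThan_atLeast0)
  also have "\<dots> = (\<Sum>k<T. \<Sum>j<n. Dblock n A l k $$ (i, j) * x $ (k*n + j))"
    unfolding sum_lessThan_mult_nat by (intro sum.cong refl) auto
  also have "\<dots> = (A *\<^sub>v vec_first x n) $ i / real (l+1) + real l / real (l+1) * x $ ((l-1)*n + i)"
    using l unfolding row by (cases "l = 0") (auto simp: sum.distrib)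
  finally show ?thesis .
qed

lemma Emat_eq_Dmat_Amat: "Emat T n \<beta> = Dmat T n (Amat n (\<lambda>_. \<beta>))"
  unfolding Emat_def Bmat_def Amat_def by simp

definition block_sums_zero :: "nat \<Rightarrow> nat \<Rightarrow> real vec \<Rightarrow> bool" where
  "block_sums_zero T n x \<longleftrightarrow> (\<forall>t<T. (\<Sum>i<n. x $ (t*n + i)) = 0)"

lemma blocknorm_eq_Max_image:
  "blocknorm T n off x = Max ((\<lambda>t. \<Sum>i<n. \<bar>x $ (off + t*n + i)\<bar>) ` {..<T})"
  unfolding blocknorm_def by (rule arg_cong[where f = Max]) auto

lemma blocknorm_0_eq: "blocknorm T n 0 x = Max ((\<lambda>t. \<Sum>i<n. \<bar>x $ (t*n + i)\<bar>) ` {..<T})"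
  by (simp add: blocknorm_eq_Max_image)

lemma blocknorm_0_ge: "t < T \<Longrightarrow> (\<Sum>i<n. \<bar>x $ (t*n + i)\<bar>) \<le> blocknorm T n 0 x"
  unfolding blocknorm_0_eq by (rule Max_ge) auto

lemma blocknorm_0_le_iff:
  "0 < T \<Longrightarrow> blocknorm T n 0 x \<le> M \<longleftrightarrow> (\<forall>t<T. (\<Sum>i<n. \<bar>x $ (t*n + i)\<bar>) \<le> M)"
  unfolding blocknorm_0_eq by (subst Max_le_iff) auto

lemma blocknorm_0_less_iff:
  "0 < T \<Longrightarrow> blocknorm T n 0 x < M \<longleftrightarrow> (\<forall>t<T. (\<Sum>i<n. \<bar>x $ (t*n + i)\<bar>) < M)"
  unfolding blocknorm_0_eq by (subst Max_less_iff) auto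

lemma blocknorm_0_pos:
  assumes "x \<in> carrier_vec (T*n)" and "x \<noteq> 0\<^sub>v (T*n)"
  shows "0 < blocknorm T n 0 x"
proof -
  obtain r where r: "r < T*n" "x $ r \<noteq> 0"
    using assms by (metis eq_vecI carrier_vecD index_zero_vec)
  then have "0 < n" by (cases n) auto
  have "\<bar>x $ (r div n * n + r mod n)\<bar> \<le> (\<Sum>i<n. \<bar>x $ (r div n * n + i)\<bar>)"
    using \<open>0 < n\<close> by (intro member_le_sum[where f = "\<lambda>i. \<bar>x $ (r div n * n + i)\<bar>"]) auto
  also have "\<dots> \<le> blocknorm T n 0 x"
    using r(1) by (intro blocknorm_0_ge) (simp add: less_mult_imp_div_less)
  finally show ?thesis using r(2) by simp
qed

lemma l1_Dmat_block_le:
  assumes A: "A \<in> carrier_mat n n" and x: "x \<in> carrier_vec (T*n)" and l: "l < T"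
  shows "(\<Sum>i<n. \<bar>(Dmat T n A *\<^sub>v x) $ (l*n + i)\<bar>)
      \<le> ((\<Sum>i<n. \<bar>(A *\<^sub>v vec_first x n) $ i\<bar>) + real l * (\<Sum>i<n. \<bar>x $ ((l-1)*n + i)\<bar>)) / real (l+1)"
proof -
  have "(\<Sum>i<n. \<bar>(Dmat T n A *\<^sub>v x) $ (l*n + i)\<bar>)
      \<le> (\<Sum>i<n. \<bar>(A *\<^sub>v vec_first x n) $ i\<bar> / real (l+1) + real l / real (l+1) * \<bar>x $ ((l-1)*n + i)\<bar>)"
    using A x l by (intro sum_mono) (simp add: Dmat_mult_vec_index abs_mult order_trans[OF abs_triangle_ineq])
  also have "\<dots> = ((\<Sum>i<n. \<bar>(A *\<^sub>v vec_first x n) $ i\<bar>) + real l * (\<Sum>i<n. \<bar>x $ ((l-1)*n + i)\<bar>)) / real (l+1)"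
    by (simp add: sum.distrib sum_divide_distrib[symmetric] sum_distrib_left add_divide_distrib)
  finally show ?thesis .
qed

lemma block_sums_zero_Dmat_Amat:
  assumes x: "x \<in> carrier_vec (T*n)" and "block_sums_zero T n x"
  shows "block_sums_zero T n (Dmat T n (Amat n b) *\<^sub>v x)"
  unfolding block_sums_zero_def
proof (intro allI impI)
  fix l assume l: "l < T"
  have zero: "(\<Sum>i<n. x $ (t*n + i)) = 0" if "t < T" for t
    using assms(2) that by (simp add: block_sums_zero_def)
  have "(\<Sum>i<n. (Dmat T n (Amat n b) *\<^sub>v x) $ (l*n + i))
      = (\<Sum>i<n. (Amat n b *\<^sub>v vec_first x n) $ i) / real (l+1)
        + real l / real (l+1) * (\<Sum>i<n. x $ ((l-1)*n + i))"
    using x l by (simp add: Dmat_mult_vec_index sum.distrib sum_divide_distrib sum_distrib_left)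
  also have "(\<Sum>i<n. (Amat n b *\<^sub>v vec_first x n) $ i) = (\<Sum>i<n. x $ (0*n + i))"
    by (simp add: sum_Amat_mult_vec vec_first_def)
  finally show "(\<Sum>i<n. (Dmat T n (Amat n b) *\<^sub>v x) $ (l*n + i)) = 0"
    using l zero[of 0] zero[of "l - 1"] by simp
qed

lemma blocknorm_Dmat_Amat_le:
  assumes b: "\<forall>i<n. 0 \<le> b i \<and> b i \<le> 1" and x: "x \<in> carrier_vec (T*n)"
  shows "blocknorm T n 0 (Dmat T n (Amat n b) *\<^sub>v x) \<le> blocknorm T n 0 x"
proof (cases "0 < T")
  case True
  let ?M = "blocknorm T n 0 x"
  have "(\<Sum>i<n. \<bar>(Amat n b *\<^sub>v vec_first x n) $ i\<bar>) \<le> (\<Sum>i<n. \<bar>vec_first x n $ i\<bar>)"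
    by (rule l1_Amat_mult_vec_le[OF vec_first_carrier b])
  also have "\<dots> = (\<Sum>i<n. \<bar>x $ (0*n + i)\<bar>)"
    by (intro sum.cong) (auto simp: vec_first_def)
  also have "\<dots> \<le> ?M" using True by (intro blocknorm_0_ge) simp
  finally have first: "(\<Sum>i<n. \<bar>(Amat n b *\<^sub>v vec_first x n) $ i\<bar>) \<le> ?M" .
  show ?thesis
    unfolding blocknorm_0_le_iff[OF True]
  proof (intro allI impI)
    fix l assume l: "l < T"
    have "(\<Sum>i<n. \<bar>x $ ((l-1)*n + i)\<bar>) \<le> ?M" using l by (intro blocknorm_0_ge) simp
    then show "(\<Sum>i<n. \<bar>(Dmat T n (Amat n b) *\<^sub>v x) $ (l*n + i)\<bar>) \<le> ?M"
      by (rule order_trans[OF l1_Dmat_block_le[OF Amat_carrier x l] weighted_average_bound(1)[OF _ first]])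
  qed
qed (simp add: blocknorm_def)

lemma blocknorm_Emat_less:
  assumes \<beta>: "0 \<le> \<beta>" "\<beta> < 1" and T: "0 < T" and x: "x \<in> carrier_vec (T*n)"
    and zero: "block_sums_zero T n x" and pos: "0 < blocknorm T n 0 x"
  shows "blocknorm T n 0 (Emat T n \<beta> *\<^sub>v x) < blocknorm T n 0 x"
proof -
  let ?M = "blocknorm T n 0 x"
  have "(\<Sum>j<n. x $ (0*n + j)) = 0" using zero T unfolding block_sums_zero_def by blast
  then have first_zero: "(\<Sum>j<n. vec_first x n $ j) = 0" by (simp add: vec_first_def)
  have first: "(\<Sum>i<n. \<bar>x $ (0*n + i)\<bar>) \<le> ?M" using T by (intro blocknorm_0_ge)
  have "(\<Sum>i<n. \<bar>(Amat n (\<lambda>_. \<beta>) *\<^sub>v vec_first x n) $ i\<bar>) = \<beta> * (\<Sum>i<n. \<bar>x $ (0*n + i)\<bar>)"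
    using \<beta> Amat_const_mult_vec_index[OF vec_first_carrier _ first_zero] unfolding sum_distrib_left
    by (intro sum.cong) (auto simp: abs_mult vec_first_def)
  also have "\<dots> < ?M"
    using mult_left_mono[OF first \<beta>(1)] mult_strict_right_mono[OF \<beta>(2) pos] by simp
  finally have first_less: "(\<Sum>i<n. \<bar>(Amat n (\<lambda>_. \<beta>) *\<^sub>v vec_first x n) $ i\<bar>) < ?M" .
  show ?thesis
    unfolding blocknorm_0_less_iff[OF T] Emat_eq_Dmat_Amat
  proof (intro allI impI)
    fix l assume l: "l < T"
    have "(\<Sum>i<n. \<bar>x $ ((l-1)*n + i)\<bar>) \<le> ?M" using l by (intro blocknorm_0_ge) simp
    then show "(\<Sum>i<n. \<bar>(Dmat T n (Amat n (\<lambda>_. \<beta>)) *\<^sub>v x) $ (l*n + i)\<bar>) < ?M"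
      by (rule order_le_less_trans[OF l1_Dmat_block_le[OF Amat_carrier x l] weighted_average_bound(2)[OF _ first_less]])
  qed
qed

lemma double_block_dim: "2*T*n = T*n + T*(n::nat)"
  by (simp add: mult_2 distrib_right)

lemma carrier_vec_splitE:
  assumes "z \<in> carrier_vec (2*T*n)"
  obtains x y where "x \<in> carrier_vec (T*n)" "y \<in> carrier_vec (T*n)" "z = x @\<^sub>v y"
proof
  have "z \<in> carrier_vec (T*n + T*n)" using assms unfolding double_block_dim .
  then show "z = vec_first z (T*n) @\<^sub>v vec_last z (T*n)" by simp
qed simp_all

lemma index_append_vec_block:
  assumes "x \<in> carrier_vec (T*n)" and "y \<in> carrier_vec (T*n)" and "t < T" and "i < n"
  shows "(x @\<^sub>v y) $ (t*n + i) = x $ (t*n + i)" and "(x @\<^sub>v y) $ (T*n + t*n + i) = y $ (t*n + i)"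
  using assms block_index_less[OF assms(3,4)] by auto

lemma append_mem_Wset_iff:
  assumes "x \<in> carrier_vec (T*n)" and "y \<in> carrier_vec (T*n)"
  shows "x @\<^sub>v y \<in> Wset T n \<longleftrightarrow> block_sums_zero T n x \<and> block_sums_zero T n y"
proof -
  have "x @\<^sub>v y \<in> carrier_vec (2*T*n)"
    unfolding double_block_dim using assms by simp
  moreover have "(\<Sum>i<n. (x @\<^sub>v y) $ (t*n + i)) = (\<Sum>i<n. x $ (t*n + i))"
    and "(\<Sum>i<n. (x @\<^sub>v y) $ (T*n + t*n + i)) = (\<Sum>i<n. y $ (t*n + i))" if "t < T" for t
    using index_append_vec_block[OF assms that] by simp_all
  ultimately show ?thesis by (auto simp: Wset_def block_sums_zero_def)
qed

lemma blocknorm_append_left: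
  assumes "x \<in> carrier_vec (T*n)" and "y \<in> carrier_vec (T*n)"
  shows "blocknorm T n 0 (x @\<^sub>v y) = blocknorm T n 0 x"
  using index_append_vec_block(1)[OF assms] unfolding blocknorm_0_eq
  by (intro arg_cong[where f = Max] image_cong sum.cong) auto

lemma blocknorm_append_right:
  assumes "x \<in> carrier_vec (T*n)" and "y \<in> carrier_vec (T*n)"
  shows "blocknorm T n (T*n) (x @\<^sub>v y) = blocknorm T n 0 y"
  using index_append_vec_block(2)[OF assms] unfolding blocknorm_eq_Max_image
  by (intro arg_cong[where f = Max] image_cong sum.cong) auto

lemma blk1_carrier: "D \<in> carrier_mat (T*n) (T*n) \<Longrightarrow> blk1 T n D \<in> carrier_mat (2*T*n) (2*T*n)"
  unfolding blk1_def double_block_dim by (rule four_block_carrier_mat) auto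

lemma blk2_carrier: "D \<in> carrier_mat (T*n) (T*n) \<Longrightarrow> blk2 T n D \<in> carrier_mat (2*T*n) (2*T*n)"
  unfolding blk2_def double_block_dim by (rule four_block_carrier_mat) auto

lemma blk1_mult_append:
  assumes "D \<in> carrier_mat (T*n) (T*n)" "x \<in> carrier_vec (T*n)" "y \<in> carrier_vec (T*n)"
  shows "blk1 T n D *\<^sub>v (x @\<^sub>v y) = (D *\<^sub>v x) @\<^sub>v y"
  using mult_mat_vec_split[OF assms(1) one_carrier_mat assms(2,3)] assms by (simp add: blk1_def)

lemma blk2_mult_append:
  assumes "D \<in> carrier_mat (T*n) (T*n)" "x \<in> carrier_vec (T*n)" "y \<in> carrier_vec (T*n)"
  shows "blk2 T n D *\<^sub>v (x @\<^sub>v y) = x @\<^sub>v (D *\<^sub>v y)"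
  using mult_mat_vec_split[OF one_carrier_mat assms(1) assms(2,3)] assms by (simp add: blk2_def)

lemma Fam_memE:
  assumes "A \<in> Fam n \<beta>" and "0 \<le> \<beta>" and "\<beta> \<le> 1"
  obtains b where "A = Amat n b" and "\<forall>i<n. 0 \<le> b i \<and> b i \<le> 1"
  using assms unfolding Fam_def by force

lemma Wset_splitE:
  assumes "z \<in> Wset T n"
  obtains x y where "x \<in> carrier_vec (T*n)" "y \<in> carrier_vec (T*n)" "z = x @\<^sub>v y"
    and "block_sums_zero T n x" "block_sums_zero T n y"
proof -
  from assms obtain x y where xy: "x \<in> carrier_vec (T*n)" "y \<in> carrier_vec (T*n)" "z = x @\<^sub>v y"
    unfolding Wset_def by (blast elim: carrier_vec_splitE)
  with assms show thesis using that append_mem_Wset_iff[OF xy(1,2)] by blast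
qed

lemma Sset_carrier: "U \<in> Sset T n \<beta>1 \<beta>2 \<Longrightarrow> U \<in> carrier_mat (2*T*n) (2*T*n)"
  unfolding Sset_def by (auto intro: blk1_carrier blk2_carrier)

lemma Sset_mult_vec:
  assumes \<beta>: "0 \<le> \<beta>1" "\<beta>1 \<le> 1" "0 \<le> \<beta>2" "\<beta>2 \<le> 1"
    and U: "U \<in> Sset T n \<beta>1 \<beta>2" and z: "z \<in> Wset T n"
  shows "U *\<^sub>v z \<in> Wset T n"
    and "blocknorm T n 0 (U *\<^sub>v z) \<le> blocknorm T n 0 z"
    and "blocknorm T n (T*n) (U *\<^sub>v z) \<le> blocknorm T n (T*n) z"
proof -
  obtain x y where xy: "x \<in> carrier_vec (T*n)" "y \<in> carrier_vec (T*n)" "z = x @\<^sub>v y"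
    and zero: "block_sums_zero T n x" "block_sums_zero T n y"
    using z by (rule Wset_splitE)
  have "U *\<^sub>v z \<in> Wset T n \<and> blocknorm T n 0 (U *\<^sub>v z) \<le> blocknorm T n 0 z
      \<and> blocknorm T n (T*n) (U *\<^sub>v z) \<le> blocknorm T n (T*n) z"
    using U \<beta> unfolding Sset_def
  proof (elim UnE CollectE exE conjE Fam_memE)
    fix A b assume "U = blk1 T n (Dmat T n A)" "A = Amat n b" "\<forall>i<n. 0 \<le> b i \<and> b i \<le> 1"
    then show ?thesis
      using xy zero block_sums_zero_Dmat_Amat blocknorm_Dmat_Amat_le
      by (simp add: blk1_mult_append append_mem_Wset_iff blocknorm_append_left blocknorm_append_right)
  next
    fix A b assume "U = blk2 T n (Dmat T n A)" "A = Amat n b" "\<forall>i<n. 0 \<le> b i \<and> b i \<le> 1"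
    then show ?thesis
      using xy zero block_sums_zero_Dmat_Amat blocknorm_Dmat_Amat_le
      by (simp add: blk2_mult_append append_mem_Wset_iff blocknorm_append_left blocknorm_append_right)
  qed
  then show "U *\<^sub>v z \<in> Wset T n"
    and "blocknorm T n 0 (U *\<^sub>v z) \<le> blocknorm T n 0 z"
    and "blocknorm T n (T*n) (U *\<^sub>v z) \<le> blocknorm T n (T*n) z"
    by auto
qed

lemma blk1_Emat_less:
  assumes "0 \<le> \<beta>" "\<beta> < 1" "0 < T" and z: "z \<in> Wset T n" and pos: "0 < blocknorm T n 0 z"
  shows "blocknorm T n 0 (blk1 T n (Emat T n \<beta>) *\<^sub>v z) < blocknorm T n 0 z"
proof -
  obtain x y where xy: "x \<in> carrier_vec (T*n)" "y \<in> carrier_vec (T*n)" "z = x @\<^sub>v y"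
    and "block_sums_zero T n x"
    using z by (rule Wset_splitE)
  then show ?thesis
    using assms blocknorm_Emat_less[of \<beta> T x n]
    by (simp add: Emat_def blk1_mult_append blocknorm_append_left)
qed

lemma blk2_Emat_less:
  assumes "0 \<le> \<beta>" "\<beta> < 1" "0 < T" and z: "z \<in> Wset T n" and pos: "0 < blocknorm T n (T*n) z"
  shows "blocknorm T n (T*n) (blk2 T n (Emat T n \<beta>) *\<^sub>v z) < blocknorm T n (T*n) z"
proof -
  obtain x y where xy: "x \<in> carrier_vec (T*n)" "y \<in> carrier_vec (T*n)" "z = x @\<^sub>v y"
    and "block_sums_zero T n y"
    using z by (rule Wset_splitE)
  then show ?thesis
    using assms blocknorm_Emat_less[of \<beta> T y n]
    by (simp add: Emat_def blk2_mult_append blocknorm_append_right)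
qed

lemma fold_invariant_nonincreasing:
  fixes \<phi> :: "'b \<Rightarrow> 'c::order"
  assumes step: "\<And>U w. U \<in> set Us \<Longrightarrow> w \<in> W \<Longrightarrow> f U w \<in> W \<and> \<phi> (f U w) \<le> \<phi> w"
    and "z \<in> W"
  shows "fold f Us z \<in> W \<and> \<phi> (fold f Us z) \<le> \<phi> z"
proof (rule fold_invariant[where Q = "\<lambda>U. U \<in> set Us"])
  fix U w assume "U \<in> set Us" and "w \<in> W \<and> \<phi> w \<le> \<phi> z"
  then show "f U w \<in> W \<and> \<phi> (f U w) \<le> \<phi> z" using step[of U w] by (blast intro: order_trans)
qed (use assms(2) in auto)

lemma fold_strictly_decreasing:
  fixes \<phi> :: "'b \<Rightarrow> 'c::{zero,linorder}"
  assumes step: "\<And>U w. U \<in> set Us \<Longrightarrow> w \<in> W \<Longrightarrow> f U w \<in> W \<and> \<phi> (f U w) \<le> \<phi> w"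
    and E: "E \<in> set Us" and strict: "\<And>w. w \<in> W \<Longrightarrow> 0 < \<phi> w \<Longrightarrow> \<phi> (f E w) < \<phi> w"
    and "z \<in> W" and "0 < \<phi> z"
  shows "\<phi> (fold f Us z) < \<phi> z"
  using assms
proof (induction Us arbitrary: z)
  case (Cons U Us)
  let ?w = "f U z"
  have w: "?w \<in> W" "\<phi> ?w \<le> \<phi> z" using Cons.prems(1,4) by auto
  have rest: "\<phi> (fold f Us ?w) \<le> \<phi> ?w"
    using fold_invariant_nonincreasing[of Us W f \<phi>] Cons.prems(1) w(1) by auto
  consider "U = E" | "E \<in> set Us" "0 < \<phi> ?w" | "\<not> 0 < \<phi> ?w"
    using Cons.prems(2) by auto
  then show ?case
  proof cases
    case 1
    then show ?thesis using strict Cons.prems(4,5) rest by (simp add: order_le_less_trans)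
  next
    case 2
    then have "\<phi> (fold f Us ?w) < \<phi> ?w" using Cons.IH[of ?w] Cons.prems(1,3) w(1) by auto
    then show ?thesis using w(2) by simp
  next
    case 3
    then show ?thesis using rest Cons.prems(5) by simp
  qed
qed simp

lemma fold_mult_mat_vec:
  assumes "set Us \<subseteq> carrier_mat N N" and "Acc \<in> carrier_mat N N" and "z \<in> carrier_vec N"
  shows "fold (\<lambda>U acc. U * acc) Us Acc *\<^sub>v z = fold (\<lambda>U v. U *\<^sub>v v) Us (Acc *\<^sub>v z)"
  using assms by (induction Us arbitrary: Acc) (auto simp: assoc_mult_mat_vec)

lemma lprod_mult_vec:
  assumes "set Us \<subseteq> carrier_mat N N" and "z \<in> carrier_vec N"
  shows "lprod N Us *\<^sub>v z = fold (\<lambda>U v. U *\<^sub>v v) Us z"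
  using fold_mult_mat_vec[OF assms(1) one_carrier_mat assms(2)] assms(2) by (simp add: lprod_def)

lemma Wset_nonzero_blocknorm_pos:
  assumes "z \<in> Wset T n" and "z \<noteq> 0\<^sub>v (2*T*n)"
  shows "0 < blocknorm T n 0 z \<or> 0 < blocknorm T n (T*n) z"
proof -
  obtain x y where xy: "x \<in> carrier_vec (T*n)" "y \<in> carrier_vec (T*n)" "z = x @\<^sub>v y"
    using assms(1) by (rule Wset_splitE)
  have "0\<^sub>v (T*n) @\<^sub>v 0\<^sub>v (T*n) = 0\<^sub>v (2*T*n)"
    unfolding double_block_dim by auto
  then have "x \<noteq> 0\<^sub>v (T*n) \<or> y \<noteq> 0\<^sub>v (T*n)"
    using assms(2) xy(3) by auto
  then show ?thesis
    using xy blocknorm_0_pos by (auto simp: blocknorm_append_left blocknorm_append_right)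
qed

lemma Sset_fold_mult_vec:
  assumes \<beta>: "0 \<le> \<beta>1" "\<beta>1 \<le> 1" "0 \<le> \<beta>2" "\<beta>2 \<le> 1"
    and Us: "set Us \<subseteq> Sset T n \<beta>1 \<beta>2" and z: "z \<in> Wset T n"
  defines "z' \<equiv> fold (\<lambda>U v. U *\<^sub>v v) Us z"
  shows "z' \<in> Wset T n" and "blocknorm T n 0 z' \<le> blocknorm T n 0 z"
    and "blocknorm T n (T*n) z' \<le> blocknorm T n (T*n) z"
proof -
  have "z' \<in> Wset T n \<and> blocknorm T n 0 z' \<le> blocknorm T n 0 z"
    unfolding z'_def using Sset_mult_vec(1,2)[OF \<beta>] Us
    by (intro fold_invariant_nonincreasing[where \<phi> = "blocknorm T n 0", OF _ z]) auto
  moreover have "blocknorm T n (T*n) z' \<le> blocknorm T n (T*n) z"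
    unfolding z'_def using Sset_mult_vec(1,3)[OF \<beta>] Us
    by (intro fold_invariant_nonincreasing[where \<phi> = "blocknorm T n (T*n)", OF _ z, THEN conjunct2]) auto
  ultimately show "z' \<in> Wset T n" "blocknorm T n 0 z' \<le> blocknorm T n 0 z"
    "blocknorm T n (T*n) z' \<le> blocknorm T n (T*n) z" by auto
qed

lemma Sset_fold_znorm_less:
  assumes \<beta>: "0 \<le> \<beta>1" "\<beta>1 < 1" "0 \<le> \<beta>2" "\<beta>2 < 1" and T: "0 < T"
    and Us: "set Us \<subseteq> Sset T n \<beta>1 \<beta>2" "blk1 T n (Emat T n \<beta>1) \<in> set Us"
      "blk2 T n (Emat T n \<beta>2) \<in> set Us"
    and z: "z \<in> Wset T n" "z \<noteq> 0\<^sub>v (2*T*n)"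
  shows "znorm T n (fold (\<lambda>U v. U *\<^sub>v v) Us z) < znorm T n z"
proof -
  let ?z' = "fold (\<lambda>U v. U *\<^sub>v v) Us z"
  let ?c0 = "blocknorm T n 0" and ?c1 = "blocknorm T n (T*n)"
  have \<beta>': "0 \<le> \<beta>1" "\<beta>1 \<le> 1" "0 \<le> \<beta>2" "\<beta>2 \<le> 1" using \<beta> by simp_all
  note step = Sset_mult_vec[OF \<beta>', OF subsetD[OF Us(1)]]
  have "?c0 ?z' < ?c0 z" if "0 < ?c0 z"
    by (rule fold_strictly_decreasing[where \<phi> = ?c0, OF _ Us(2) _ z(1) that])
      (use step(1,2) blk1_Emat_less[of \<beta>1 T _ n] \<beta> T in auto)
  moreover have "?c1 ?z' < ?c1 z" if "0 < ?c1 z"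
    by (rule fold_strictly_decreasing[where \<phi> = ?c1, OF _ Us(3) _ z(1) that])
      (use step(1,3) blk2_Emat_less[of \<beta>2 T _ n] \<beta> T in auto)
  ultimately show ?thesis
    using Sset_fold_mult_vec[OF \<beta>' Us(1) z(1)] Wset_nonzero_blocknorm_pos[OF z] unfolding znorm_def
    by (cases "0 < ?c0 z"; cases "0 < ?c1 z") (auto simp: max_def)
qed

theorem lemma5:
  fixes n T :: nat and \<beta>1 \<beta>2 :: real
  assumes "n \<ge> 1" and "T \<ge> 1"
    and "0 < \<beta>1" and "\<beta>1 < 1" and "0 < \<beta>2" and "\<beta>2 < 1"
  shows "(\<forall>H \<in> Vset T n \<beta>1 \<beta>2. \<forall>z \<in> Wset T n. H *\<^sub>v z \<in> Wset T n) \<and>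
      (\<forall>H \<in> Vset T n \<beta>1 \<beta>2. \<forall>z \<in> Wset T n. znorm T n (H *\<^sub>v z) \<le> znorm T n z) \<and>
      (\<forall>Us. Us \<noteq> [] \<and> set Us \<subseteq> Sset T n \<beta>1 \<beta>2
            \<and> blk1 T n (Emat T n \<beta>1) \<in> set Us \<and> blk2 T n (Emat T n \<beta>2) \<in> set Us
            \<longrightarrow> (\<forall>z \<in> Wset T n. z \<noteq> 0\<^sub>v (2*T*n)
                   \<longrightarrow> znorm T n (lprod (2*T*n) Us *\<^sub>v z) < znorm T n z))"
proof -
  have \<beta>: "0 \<le> \<beta>1" "\<beta>1 \<le> 1" "0 \<le> \<beta>2" "\<beta>2 \<le> 1" using assms by simp_all
  have prod: "lprod (2*T*n) Us *\<^sub>v z = fold (\<lambda>U v. U *\<^sub>v v) Us z"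
    if "set Us \<subseteq> Sset T n \<beta>1 \<beta>2" and "z \<in> Wset T n" for Us z
    using that by (intro lprod_mult_vec) (auto simp: Sset_carrier Wset_def)
  have "H *\<^sub>v z \<in> Wset T n \<and> znorm T n (H *\<^sub>v z) \<le> znorm T n z"
    if H: "H \<in> Vset T n \<beta>1 \<beta>2" and z: "z \<in> Wset T n" for H z
  proof -
    obtain Us where Us: "set Us \<subseteq> Sset T n \<beta>1 \<beta>2" and "H = lprod (2*T*n) Us"
      using H unfolding Vset_def by blast
    then show ?thesis
      using Sset_fold_mult_vec[OF \<beta> Us z] prod[OF Us z] unfolding znorm_def
      by (auto intro!: max.mono simp del: max.bounded_iff)
  qed
  moreover have "znorm T n (lprod (2*T*n) Us *\<^sub>v z) < znorm T n z"
    if "set Us \<subseteq> Sset T n \<beta>1 \<beta>2" "blk1 T n (Emat T n \<beta>1) \<in> set Us"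
      "blk2 T n (Emat T n \<beta>2) \<in> set Us" "z \<in> Wset T n" "z \<noteq> 0\<^sub>v (2*T*n)" for Us z
    using Sset_fold_znorm_less[OF _ _ _ _ _ that] prod[OF that(1,4)] assms by simp
  ultimately show ?thesis by blast
qed

end
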